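(* Let $M>2$, $p_M=\frac{M+2}{M-2}$, $m\ge1$, and for $p\in(1,p_M)$ let $v_p$ be the unique solution in $H^1_{0,M}$ of $-(t^{M-1}v')'=t^{M-1}|v|^{p-1}v$ on $(0,1)$, $v'(0)=0$, $v(1)=0$, with exactly $m$ nodal zones and $v_p(0)>0$, and let $f_p(r)=pr^2|v_p(r)|^{p-1}$. Then there exist $C>0$ and a left neighborhood of $p_M$ such that $0\le f_p(r)\le C$ for all $r\in[0,1]$ and all $p$ in that neighborhood.
   Context: $H^1_{0,M}$: measurable $v$ on $(0,1)$ with $\int_0^1t^{M-1}(v^2+|v'|^2)<\infty$, $v(1)=0$. *)

theory Defs
  imports "HOL-Analysis.Analysis"
begin

definition pM :: "real \<Rightarrow> real" where
  "pM M = (M + 2) / (M - 2)"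

text \<open>v is a solution in H^1_{0,M} of -(t^{M-1} v')' = t^{M-1} |v|^{p-1} v on (0,1),
  v'(0) = 0, v(1) = 0.  Solutions of this ODE are classical, so v is taken
  differentiable on [0,1] with derivative v', t^{M-1} v' differentiable on (0,1),
  and the weighted H^1 norm finite.\<close>
definition radial_sol :: "real \<Rightarrow> real \<Rightarrow> (real \<Rightarrow> real) \<Rightarrow> bool" where
  "radial_sol M p v \<longleftrightarrow>
     (\<exists>v'. (\<forall>r\<in>{0..1}. (v has_real_derivative v' r) (at r within {0..1}))
        \<and> v' 0 = 0 \<and> v 1 = 0
        \<and> (\<forall>r\<in>{0<..<1}. ((\<lambda>t. t powr (M - 1) * v' t) has_real_derivative
               - (r powr (M - 1) * \<bar>v r\<bar> powr (p - 1) * v r)) (at r))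
        \<and> (\<lambda>t. t powr (M - 1) * ((v t)\<^sup>2 + (v' t)\<^sup>2)) integrable_on {0<..<1})"

definition nodal_zones :: "(real \<Rightarrow> real) \<Rightarrow> nat" where
  "nodal_zones v = card (components {r \<in> {0..<1}. v r \<noteq> 0})"

definition fp :: "real \<Rightarrow> (real \<Rightarrow> real) \<Rightarrow> real \<Rightarrow> real" where
  "fp p v r = p * r\<^sup>2 * \<bar>v r\<bar> powr (p - 1)"

end

(*
  Write u for v_p and flux r = r^(M-1) u'(r), so that flux' = -r^(M-1) |u|^(p-1) u and the flux
  is monotone on every nodal zone. The quantities r^2 |u|^(p-1) and r^(2/(p-1)+1) |u'| are
  invariant under the scaling u |-> l^(2/(p-1)) u(l r) of the equation; they are bounded zone by
  zone. On a zone where u > 0, u rises from a zero a to its maximum at c and falls to the next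
  zero b. On the ascent, u' is decreasing, which bounds c^2 u(c)^(p-1) in terms of the scaled
  slope at a. On the descent, u' <= -u^p r/(2M) far from c, so u^(1-p) grows like
  (p-1) r^2/(8M); this bounds r^2 u^(p-1), and integrating the flux then bounds the scaled slope
  at b as long as 2p/(p-1) < M. Starting from u'(0) = 0 and passing through the m zones gives an
  explicit bound depending only on M, p and m, continuous in p on the compact window
  [(M+1)/(M-2), p_M]; its maximum there is the constant C.
*)
theory Submission
  imports Defs
begin

section \<open>Zeros and nodal components\<close>

lemma first_zero_after:
  fixes u :: "real \<Rightarrow> real"
  assumes cont: "continuous_on {x0..x1} u" and pos: "u x0 > 0" and zero: "u x1 = 0"
    and "x0 < x1"
  shows "\<exists>b. x0 < b \<and> b \<le> x1 \<and> u b = 0 \<and> (\<forall>r. x0 \<le> r \<and> r < b \<longrightarrow> u r > 0)"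
proof -
  let ?Z = "{r\<in>{x0..x1}. u r = 0}"
  have "closed ?Z"
    using continuous_closed_preimage_constant[OF cont closed_atLeastAtMost] by simp
  moreover have "bounded ?Z" by (rule bounded_subset[of "{x0..x1}"]) auto
  ultimately have "compact ?Z" by (simp add: compact_eq_bounded_closed)
  moreover have "?Z \<noteq> {}" using \<open>x0 < x1\<close> zero by auto
  ultimately obtain b where b: "b \<in> ?Z" and b_min: "\<And>y. y \<in> ?Z \<Longrightarrow> b \<le> y"
    by (meson compact_attains_inf)
  have "u r > 0" if r: "x0 \<le> r" "r < b" for r
  proof (rule ccontr)
    assume "\<not> u r > 0"
    then have "u r \<le> 0" "x0 < r" using pos r by (auto simp: order.order_iff_strict)
    moreover have "continuous_on {x0..r} u"
      using continuous_on_subset[OF cont] r b by auto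
    ultimately obtain y where y: "x0 \<le> y" "y \<le> r" "u y = 0"
      using IVT2'[of u r 0 x0] pos by auto
    then have "y \<in> ?Z" using r b by auto
    then show False using b_min[of y] r y by linarith
  qed
  moreover have "x0 < b" using b pos by (cases "x0 = b") auto
  ultimately show ?thesis using b by (intro exI[of _ b]) auto
qed

definition components_below :: "real set \<Rightarrow> real \<Rightarrow> real set set" where
  "components_below U b = {C \<in> components U. C \<subseteq> {..<b}}"

lemma connected_component_in_components_below:
  fixes U :: "real set"
  assumes "x \<in> U" "x < b" "b \<notin> U"
  shows "connected_component_set U x \<in> components_below U b"
proof -
  have "y < b" if y: "y \<in> connected_component_set U x" for y
  proof (rule ccontr)
    assume "\<not> y < b"
    moreover have "x \<in> connected_component_set U x" using assms(1) by simp
    ultimately have "b \<in> connected_component_set U x"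
      using connectedD_interval[OF connected_connected_component _ y, of x b] assms(2) by simp
    then show False using connected_component_subset assms(3) by blast
  qed
  then show ?thesis using assms(1) by (auto simp: components_below_def components_def)
qed

lemma card_components_below_less:
  fixes U :: "real set"
  assumes "finite (components U)" "x \<in> U" "z < x" "x < b" "b \<notin> U"
  shows "card (components_below U z) < card (components_below U b)"
proof (rule psubset_card_mono)
  show "finite (components_below U b)"
    using assms(1) by (simp add: components_below_def)
  let ?C = "connected_component_set U x"
  have "?C \<in> components_below U b"
    using connected_component_in_components_below assms(2,4,5) .
  moreover have "x \<in> ?C" "x \<notin> {..<z}" using assms(2,3) by auto
  then have "?C \<notin> components_below U z"
    unfolding components_below_def by blast
  moreover have "components_below U z \<subseteq> components_below U b"
    using assms(3,4) by (auto simp: components_below_def)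
  ultimately show "components_below U z \<subset> components_below U b"
    by (auto simp: psubset_eq)
qed

section \<open>Power inequalities and the zone constants\<close>

lemma powr_weight_bound:
  fixes x y B M p :: real
  assumes "0 < x" "0 \<le> y" "1 < p" "x\<^sup>2 * y powr (p - 1) \<le> B"
  shows "x powr (M - 1) * y powr p \<le> B powr (p / (p - 1)) * x powr (M - 2 * p / (p - 1) - 1)"
proof -
  have "B \<ge> 0" using assms(4) by (meson order_trans zero_le_mult_iff zero_le_power2 powr_ge_zero)
  have "y powr (p - 1) \<le> B / x\<^sup>2" using assms by (simp add: field_simps)
  then have "(y powr (p - 1)) powr (p / (p - 1)) \<le> (B / x\<^sup>2) powr (p / (p - 1))"
    using assms(3) by (intro powr_mono2) auto
  moreover have "(y powr (p - 1)) powr (p / (p - 1)) = y powr p" using assms(3) by (simp add: powr_powr)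
  moreover have "(x powr 2) powr (p / (p - 1)) = x powr (2 * p / (p - 1))" by (simp add: powr_powr)
  then have "(B / x\<^sup>2) powr (p / (p - 1)) = B powr (p / (p - 1)) / x powr (2 * p / (p - 1))"
    using \<open>B \<ge> 0\<close> assms(1) by (simp add: powr_divide)
  ultimately have "y powr p \<le> B powr (p / (p - 1)) / x powr (2 * p / (p - 1))" by simp
  then have "x powr (M - 1) * y powr p \<le> x powr (M - 1) * (B powr (p / (p - 1)) / x powr (2 * p / (p - 1)))"
    by (intro mult_left_mono) auto
  also have "\<dots> = B powr (p / (p - 1)) * (x powr (M - 1) / x powr (2 * p / (p - 1)))" by simp
  also have "x powr (M - 1) / x powr (2 * p / (p - 1)) = x powr (M - 2 * p / (p - 1) - 1)"
    using assms(1) by (simp add: powr_diff[symmetric] algebra_simps)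
  finally show ?thesis .
qed

definition peak_bound :: "real \<Rightarrow> real \<Rightarrow> real" where
  "peak_bound p D = max (2 powr (p + 4)) ((2 powr (4 / (p - 1) + p + 3) * D\<^sup>2) powr ((p - 1) / (p + 1)))"

lemma scaled_size_le_of_rescaled:
  fixes c V p K :: real
  assumes "0 < c" "0 < V" "1 < p" "c powr (4 / (p - 1) + 2) * V powr (p + 1) \<le> K"
  shows "c\<^sup>2 * V powr (p - 1) \<le> K powr ((p - 1) / (p + 1))"
proof -
  define T where "T = c\<^sup>2 * V powr (p - 1)"
  have "(c powr 2) powr ((p + 1) / (p - 1)) = c powr (4 / (p - 1) + 2)"
    using assms(3) by (simp add: powr_powr field_simps)
  moreover have "(V powr (p - 1)) powr ((p + 1) / (p - 1)) = V powr (p + 1)"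
    using assms(3) by (simp add: powr_powr)
  ultimately have "T powr ((p + 1) / (p - 1)) = c powr (4 / (p - 1) + 2) * V powr (p + 1)"
    using assms(1) by (simp add: T_def powr_mult)
  then have "(T powr ((p + 1) / (p - 1))) powr ((p - 1) / (p + 1)) \<le> K powr ((p - 1) / (p + 1))"
    using assms(3,4) by (intro powr_mono2) auto
  moreover have "(T powr ((p + 1) / (p - 1))) powr ((p - 1) / (p + 1)) = T"
    using assms by (simp add: powr_powr T_def)
  ultimately show ?thesis by (simp add: T_def)
qed

lemma rescaled_bound_of_slope:
  fixes a c V s p D :: real
  assumes "0 < c" "c / 2 < a" "0 < V" "1 < p" "0 < s"
    and s_sq: "V * (V / 2) powr p / 2 \<le> s\<^sup>2" and D: "a powr (2 / (p - 1) + 1) * s \<le> D"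
  shows "c powr (4 / (p - 1) + 2) * V powr (p + 1) \<le> 2 powr (4 / (p - 1) + p + 3) * D\<^sup>2"
proof -
  define g where "g = 4 / (p - 1) + 2"
  have "g > 0" using assms(4) by (simp add: g_def add_pos_pos)
  have "(a powr (2 / (p - 1) + 1))\<^sup>2 = a powr g"
    by (simp add: g_def power2_eq_square powr_add[symmetric])
  then have "a powr g * s\<^sup>2 \<le> D\<^sup>2"
    using power_mono[OF D, of 2] assms(5) by (simp add: power_mult_distrib)
  have "V * V powr p = V powr (p + 1)" using assms(3) by (simp add: powr_mult_base add.commute)
  then have V_power: "V * (V / 2) powr p / 2 = V powr (p + 1) / 2 powr (p + 1)"
    using assms(3) by (simp add: powr_divide powr_add)
  have exponent: "g + (p + 1) = 4 / (p - 1) + p + 3" by (simp add: g_def)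
  have "2 powr g * 2 powr (p + 1) = (2::real) powr (4 / (p - 1) + p + 3)"
    by (simp only: powr_add[symmetric] exponent)
  then have "c powr g * V powr (p + 1) / 2 powr (4 / (p - 1) + p + 3)
      = (c / 2) powr g * (V * (V / 2) powr p / 2)"
    using assms(1) V_power by (simp add: powr_divide)
  also have "\<dots> \<le> a powr g * s\<^sup>2"
    using s_sq assms(1-3) \<open>g > 0\<close> by (intro mult_mono powr_mono2) auto
  also have "\<dots> \<le> D\<^sup>2" by fact
  finally show ?thesis by (simp add: g_def divide_le_eq mult.commute)
qed

lemma peak_bound_of_estimates:
  fixes a c V s p D :: real
  assumes "0 < a" "a < c" "0 < V" "1 < p"
    and height: "(c - a)\<^sup>2 * V powr (p - 1) \<le> 4 * 2 powr p"
    and slope: "V \<le> (c - a) * s" "(c - a) / 2 * (V / 2) powr p \<le> s"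
    and D: "a powr (2 / (p - 1) + 1) * \<bar>s\<bar> \<le> D"
  shows "c\<^sup>2 * V powr (p - 1) \<le> peak_bound p D"
proof (cases "c\<^sup>2 * V powr (p - 1) \<le> 2 powr (p + 4)")
  case True
  then show ?thesis by (simp add: peak_bound_def)
next
  case False
  have "(2::real) powr (p + 4) = 16 * 2 powr p" by (simp add: powr_add)
  then have "4 * ((c - a)\<^sup>2 * V powr (p - 1)) < c\<^sup>2 * V powr (p - 1)" using False height by linarith
  then have "4 * (c - a)\<^sup>2 < c\<^sup>2" using assms(3) by simp
  then have "(2 * (c - a))\<^sup>2 < c\<^sup>2" by (simp only: power_mult_distrib) simp
  then have "2 * (c - a) < c" by (rule power_less_imp_less_base) (use assms(1,2) in linarith)
  then have "c / 2 < a" by simp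
  have "0 < (c - a) * s" using slope(1) assms(3) by linarith
  then have "0 < s" using assms(2) by (simp add: zero_less_mult_iff)
  have "V / (c - a) * ((c - a) / 2 * (V / 2) powr p) \<le> s * s"
    using slope assms(2,3) \<open>0 < s\<close> by (intro mult_mono) (auto simp: divide_le_eq mult.commute)
  then have "V * (V / 2) powr p / 2 \<le> s\<^sup>2" using assms(2) by (simp add: power2_eq_square)
  then have "c powr (4 / (p - 1) + 2) * V powr (p + 1) \<le> 2 powr (4 / (p - 1) + p + 3) * D\<^sup>2"
    using rescaled_bound_of_slope[OF _ \<open>c / 2 < a\<close> assms(3,4) \<open>0 < s\<close>] D \<open>0 < s\<close> assms(1,2) by simp
  then have "c\<^sup>2 * V powr (p - 1) \<le> (2 powr (4 / (p - 1) + p + 3) * D\<^sup>2) powr ((p - 1) / (p + 1))"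
    using scaled_size_le_of_rescaled assms(1-4) by simp
  then show ?thesis by (simp add: peak_bound_def)
qed

definition scaled_size :: "real \<Rightarrow> (real \<Rightarrow> real) \<Rightarrow> real \<Rightarrow> real" where
  "scaled_size p u r = r\<^sup>2 * \<bar>u r\<bar> powr (p - 1)"

lemma scaled_size_le_of_le:
  assumes "0 \<le> r" "r \<le> c" "0 \<le> u r" "u r \<le> u c" "1 < p"
  shows "scaled_size p u r \<le> c\<^sup>2 * u c powr (p - 1)"
proof -
  have "u r powr (p - 1) \<le> u c powr (p - 1)" using assms(3-5) by (intro powr_mono2) auto
  moreover have "r\<^sup>2 \<le> c\<^sup>2" using assms(1,2) by (intro power_mono) auto
  ultimately show ?thesis using assms(3) by (simp add: scaled_size_def mult_mono)
qed

definition scaled_slope :: "real \<Rightarrow> (real \<Rightarrow> real) \<Rightarrow> real \<Rightarrow> real" where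
  "scaled_slope p u' r = r powr (2 / (p - 1) + 1) * \<bar>u' r\<bar>"

definition zone_bound :: "real \<Rightarrow> real \<Rightarrow> real \<Rightarrow> real" where
  "zone_bound M p D = max (2 * 2 powr (2 / M) * peak_bound p D) (8 * M / (p - 1))"

definition next_slope_bound :: "real \<Rightarrow> real \<Rightarrow> real \<Rightarrow> real" where
  "next_slope_bound M p D = zone_bound M p D powr (p / (p - 1)) / (M - 2 * p / (p - 1))"

lemma peak_bound_nonneg: "0 \<le> peak_bound p D"
  by (simp add: peak_bound_def le_max_iff_disj)

lemma zone_bound_pos: "0 < M \<Longrightarrow> 1 < p \<Longrightarrow> 0 < zone_bound M p D"
  by (simp add: zone_bound_def less_max_iff_disj)

lemma peak_bound_le_zone_bound: "0 < M \<Longrightarrow> peak_bound p D \<le> zone_bound M p D"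
proof -
  assume "0 < M"
  then have "(1::real) \<le> 2 powr (2 / M)" by (intro ge_one_powr_ge_zero) auto
  then have "peak_bound p D \<le> 2 * 2 powr (2 / M) * peak_bound p D"
    using peak_bound_nonneg[of p D] by (intro mult_le_cancel_right1[THEN iffD2]) auto
  then show ?thesis by (simp add: zone_bound_def)
qed

(* The initial value is irrelevant: the first zone starts at r = 0, where u' = 0. *)
fun slope_bounds :: "real \<Rightarrow> real \<Rightarrow> nat \<Rightarrow> real" where
  "slope_bounds M p 0 = 1"
| "slope_bounds M p (Suc k) = next_slope_bound M p (slope_bounds M p k)"

definition total_zone_bound :: "real \<Rightarrow> real \<Rightarrow> nat \<Rightarrow> real" where
  "total_zone_bound M p k = (\<Sum>j<k. zone_bound M p (slope_bounds M p j))"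

lemma total_zone_bound_Suc:
  "total_zone_bound M p (Suc k) = total_zone_bound M p k + zone_bound M p (slope_bounds M p k)"
  by (simp add: total_zone_bound_def)

lemma total_zone_bound_nonneg: "0 < M \<Longrightarrow> 1 < p \<Longrightarrow> 0 \<le> total_zone_bound M p k"
  unfolding total_zone_bound_def using zone_bound_pos by (simp add: sum_nonneg less_imp_le)

lemma continuous_on_zone_bound:
  assumes "0 < M" "\<And>p. p \<in> P \<Longrightarrow> 1 < p" "continuous_on P D" "\<And>p. p \<in> P \<Longrightarrow> 0 < D p"
  shows "continuous_on P (\<lambda>p. zone_bound M p (D p))"
proof -
  have "\<forall>p\<in>P. 1 < p \<and> 0 < D p" using assms(2,4) by auto
  then show ?thesis
    unfolding zone_bound_def peak_bound_def using assms(1,3) by (intro continuous_intros) auto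
qed

lemma continuous_on_slope_bounds:
  assumes "0 < M" and window: "\<And>p. p \<in> P \<Longrightarrow> 1 < p \<and> 2 * p / (p - 1) < M"
  shows "continuous_on P (\<lambda>p. slope_bounds M p k) \<and> (\<forall>p\<in>P. 0 < slope_bounds M p k)"
proof (induction k)
  case 0
  then show ?case by (simp add: continuous_on_const)
next
  case (Suc k)
  have "continuous_on P (\<lambda>p. zone_bound M p (slope_bounds M p k))"
    using continuous_on_zone_bound[OF assms(1)] Suc window by blast
  then have "continuous_on P (\<lambda>p. zone_bound M p (slope_bounds M p k) powr (p / (p - 1)) / (M - 2 * p / (p - 1)))"
    using window zone_bound_pos[OF assms(1)] by (intro continuous_intros) (auto simp: less_imp_neq[symmetric])
  moreover have "0 < slope_bounds M p (Suc k)" if "p \<in> P" for p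
  proof -
    have "0 < zone_bound M p (slope_bounds M p k)" using zone_bound_pos[OF assms(1)] window[OF that] by simp
    then show ?thesis using window[OF that] by (simp add: next_slope_bound_def)
  qed
  ultimately show ?case by (simp add: next_slope_bound_def)
qed

lemma continuous_on_total_zone_bound:
  assumes "0 < M" "\<And>p. p \<in> P \<Longrightarrow> 1 < p \<and> 2 * p / (p - 1) < M"
  shows "continuous_on P (\<lambda>p. total_zone_bound M p k)"
  unfolding total_zone_bound_def
  using continuous_on_zone_bound[OF assms(1)] continuous_on_slope_bounds[OF assms] assms(2)
  by (intro continuous_on_sum) blast

section \<open>The radial Lane-Emden equation\<close>

locale radial_lane_emden =
  fixes M p :: real and u u' :: "real \<Rightarrow> real"
  assumes M_gt_2: "M > 2" and p_gt_1: "p > 1"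
    and has_deriv: "\<And>r. 0 < r \<Longrightarrow> r < 1 \<Longrightarrow> (u has_real_derivative u' r) (at r)"
    and has_deriv_weighted: "\<And>r. 0 < r \<Longrightarrow> r < 1 \<Longrightarrow>
      ((\<lambda>t. t powr (M - 1) * u' t) has_real_derivative
        - (r powr (M - 1) * \<bar>u r\<bar> powr (p - 1) * u r)) (at r)"
    and continuous: "continuous_on {0..1} u"
begin

lemma radial_lane_emden_uminus: "radial_lane_emden M p (\<lambda>r. - u r) (\<lambda>r. - u' r)"
proof
  fix r :: real assume r: "0 < r" "r < 1"
  show "((\<lambda>r. - u r) has_real_derivative - u' r) (at r)"
    using has_deriv[OF r] by (rule DERIV_minus)
  show "((\<lambda>t. t powr (M - 1) * - u' t) has_real_derivative
      - (r powr (M - 1) * \<bar>- u r\<bar> powr (p - 1) * - u r)) (at r)"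
    using DERIV_minus[OF has_deriv_weighted[OF r]] by simp
next
  show "continuous_on {0..1} (\<lambda>r. - u r)" using continuous by (rule continuous_on_minus)
qed (use M_gt_2 p_gt_1 in auto)

definition flux :: "real \<Rightarrow> real" where
  "flux t = t powr (M - 1) * u' t"

lemma has_deriv_flux:
  "0 < r \<Longrightarrow> r < 1 \<Longrightarrow>
    (flux has_real_derivative - (r powr (M - 1) * \<bar>u r\<bar> powr (p - 1) * u r)) (at r)"
  using has_deriv_weighted unfolding flux_def[abs_def] by blast

lemma deriv_eq_flux: "0 < r \<Longrightarrow> u' r = flux r / r powr (M - 1)"
  by (simp add: flux_def)

lemma continuous_on_flux:
  assumes "0 < s" "t < 1" shows "continuous_on {s..t} flux"
proof (rule DERIV_atLeastAtMost_imp_continuous_on)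
  fix x assume "s \<le> x" "x \<le> t"
  then show "\<exists>y. (flux has_real_derivative y) (at x)" using assms has_deriv_flux[of x] by auto
qed

lemma continuous_on_u: "0 \<le> s \<Longrightarrow> t \<le> 1 \<Longrightarrow> continuous_on {s..t} u"
  by (rule continuous_on_subset[OF continuous]) auto

lemma flux_strict_antimono:
  assumes "0 < s" "s < t" "t < 1" "\<And>r. s < r \<Longrightarrow> r < t \<Longrightarrow> u r > 0"
  shows "flux t < flux s"
proof (rule DERIV_neg_imp_decreasing_open[OF assms(2) _ continuous_on_flux])
  fix x assume x: "s < x" "x < t"
  then have "u x > 0" "x > 0" using assms by auto
  then have "- (x powr (M - 1) * \<bar>u x\<bar> powr (p - 1) * u x) < 0" by simp
  then show "\<exists>y. (flux has_real_derivative y) (at x) \<and> y < 0"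
    using has_deriv_flux[of x] x assms by auto
qed (use assms in auto)

lemma flux_antimono:
  assumes "0 < s" "s \<le> t" "t < 1" "\<And>r. s < r \<Longrightarrow> r < t \<Longrightarrow> u r \<ge> 0"
  shows "flux t \<le> flux s"
proof (rule DERIV_nonpos_imp_decreasing_open[OF assms(2) _ continuous_on_flux])
  fix x assume x: "s < x" "x < t"
  then have "u x \<ge> 0" using assms by auto
  then have "- (x powr (M - 1) * \<bar>u x\<bar> powr (p - 1) * u x) \<le> 0" by simp
  then show "\<exists>y. (flux has_real_derivative y) (at x) \<and> y \<le> 0"
    using has_deriv_flux[of x] x assms by auto
qed (use assms in auto)

lemma u_antimono:
  assumes "0 \<le> s" "s \<le> t" "t \<le> 1" "\<And>r. s < r \<Longrightarrow> r < t \<Longrightarrow> flux r \<le> 0"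
  shows "u t \<le> u s"
proof (rule DERIV_nonpos_imp_decreasing_open[OF assms(2) _ continuous_on_u])
  fix x assume x: "s < x" "x < t"
  have "u' x \<le> 0" using assms(4)[OF x] deriv_eq_flux[of x] x assms by (simp add: divide_nonpos_pos)
  then show "\<exists>y. (u has_real_derivative y) (at x) \<and> y \<le> 0" using has_deriv[of x] x assms by auto
qed (use assms in auto)

lemma u_mono:
  assumes "0 \<le> s" "s \<le> t" "t \<le> 1" "\<And>r. s < r \<Longrightarrow> r < t \<Longrightarrow> flux r \<ge> 0"
  shows "u s \<le> u t"
proof (rule DERIV_nonneg_imp_increasing_open[OF assms(2) _ continuous_on_u])
  fix x assume x: "s < x" "x < t"
  have "u' x \<ge> 0" using assms(4)[OF x] deriv_eq_flux[of x] x assms by simp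
  then show "\<exists>y. (u has_real_derivative y) (at x) \<and> y \<ge> 0" using has_deriv[of x] x assms by auto
qed (use assms in auto)

lemma flux_small_near_0:
  assumes deriv_0: "(u has_real_derivative 0) (at 0 within {0..1})"
    and r0: "0 < r0" "r0 \<le> 1" and "\<beta> > 0" and sign: "\<sigma> = 1 \<or> \<sigma> = -1"
  shows "\<exists>s. 0 < s \<and> s < r0 \<and> \<sigma> * flux s < \<beta>"
proof (rule ccontr)
  assume "\<not> ?thesis"
  then have big: "\<And>s. 0 < s \<Longrightarrow> s < r0 \<Longrightarrow> \<beta> \<le> \<sigma> * flux s" by force
  have "\<forall>e>0. \<exists>d>0. \<forall>y\<in>{0..1}. norm (y - 0) < d \<longrightarrow>
      norm (u y - u 0 - 0 * (y - 0)) \<le> e * norm (y - 0)"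
    using deriv_0 unfolding has_field_derivative_def has_derivative_within_alt by blast
  then obtain d where "d > 0" and d: "\<And>y. y \<in> {0..1} \<Longrightarrow> norm (y - 0) < d \<Longrightarrow>
      norm (u y - u 0 - 0 * (y - 0)) \<le> (\<beta> / 4) * norm (y - 0)"
    using \<open>\<beta> > 0\<close> by (metis divide_pos_pos zero_less_numeral)
  define s where "s = min d r0 / 2"
  have s: "0 < s" "s < d" "s < r0" "s < 1" using \<open>d > 0\<close> r0 by (auto simp: s_def)
  have near_s: "\<bar>u s - u 0\<bar> \<le> (\<beta> / 4) * s" using d[of s] s by auto
  have near_s2: "\<bar>u (s / 2) - u 0\<bar> \<le> (\<beta> / 4) * (s / 2)" using d[of "s / 2"] s by auto
  obtain \<xi> where \<xi>: "s / 2 < \<xi>" "\<xi> < s" "u s - u (s / 2) = (s - s / 2) * u' \<xi>"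
    using MVT2[of "s / 2" s u u'] has_deriv s by force
  have weight: "\<xi> powr (M - 1) \<le> 1" "\<xi> powr (M - 1) > 0"
    using powr_mono2[of "M - 1" \<xi> 1] \<xi> s M_gt_2 by auto
  have "\<beta> \<le> \<beta> / \<xi> powr (M - 1)" using weight \<open>\<beta> > 0\<close> by (simp add: le_divide_eq)
  also have "\<dots> \<le> (\<sigma> * flux \<xi>) / \<xi> powr (M - 1)"
    using big[of \<xi>] \<xi> s weight by (simp add: divide_right_mono)
  also have "\<dots> = \<sigma> * u' \<xi>" using deriv_eq_flux[of \<xi>] \<xi> s by simp
  finally have "(s / 2) * \<beta> \<le> (s / 2) * (\<sigma> * u' \<xi>)" using s by (intro mult_left_mono) auto
  also have "\<dots> = \<sigma> * ((s - s / 2) * u' \<xi>)" by (simp add: algebra_simps)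
  also have "\<dots> = \<sigma> * (u s - u (s / 2))" using \<xi>(3) by simp
  also have "\<dots> \<le> \<bar>u s - u (s / 2)\<bar>" using sign by auto
  also have "\<dots> \<le> (\<beta> / 4) * s + (\<beta> / 4) * (s / 2)" using near_s near_s2 by linarith
  finally show False using \<open>\<beta> > 0\<close> s by (simp add: field_simps)
qed

lemma flux_drop_on_descent:
  assumes "0 < s" "s \<le> t" "t < 1" "u t > 0" and above: "\<And>x. s \<le> x \<Longrightarrow> x \<le> t \<Longrightarrow> u t \<le> u x"
  shows "flux t \<le> flux s - u t powr p * (t powr M - s powr M) / M"
proof -
  define h where "h \<tau> = flux \<tau> + u t powr p * \<tau> powr M / M" for \<tau>
  have "h t \<le> h s"
  proof (rule DERIV_nonpos_imp_nonincreasing[OF \<open>s \<le> t\<close>])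
    fix x assume x: "s \<le> x" "x \<le> t"
    then have x01: "0 < x" "x < 1" and ux: "u t \<le> u x" using assms by auto
    have "((\<lambda>\<tau>. \<tau> powr M) has_real_derivative M * x powr (M - 1)) (at x)"
      by (rule has_real_derivative_powr) (use x01 in auto)
    from DERIV_add[OF has_deriv_flux[OF x01] DERIV_cdivide[OF DERIV_cmult[OF this], of "u t powr p" M]]
    have "(h has_real_derivative - (x powr (M - 1) * \<bar>u x\<bar> powr (p - 1) * u x)
        + u t powr p * (M * x powr (M - 1)) / M) (at x)"
      unfolding h_def[abs_def] by simp
    moreover have "\<bar>u x\<bar> powr (p - 1) * u x = u x powr p"
      using ux assms(4) by (simp add: powr_mult_base mult.commute)
    then have "- (x powr (M - 1) * \<bar>u x\<bar> powr (p - 1) * u x) + u t powr p * (M * x powr (M - 1)) / M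
        = x powr (M - 1) * (u t powr p - u x powr p)" using M_gt_2 by (simp add: algebra_simps)
    moreover have "u t powr p \<le> u x powr p" using ux assms(4) p_gt_1 by (intro powr_mono2) auto
    then have "x powr (M - 1) * (u t powr p - u x powr p) \<le> 0" by (simp add: mult_nonneg_nonpos)
    ultimately show "\<exists>y. (h has_real_derivative y) (at x) \<and> y \<le> 0" by auto
  qed
  then show ?thesis by (simp add: h_def algebra_simps diff_divide_distrib)
qed

lemma deriv_bound_on_descent:
  assumes "0 \<le> c" "c * 2 powr (1 / M) < t" "t < b" "b \<le> 1"
    and pos: "\<And>x. c \<le> x \<Longrightarrow> x < b \<Longrightarrow> u x > 0"
    and flux_nonpos: "\<And>x. c < x \<Longrightarrow> x < b \<Longrightarrow> flux x \<le> 0"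
  shows "u' t \<le> - (u t powr p) * t / (2 * M)"
proof -
  define s where "s = t * 2 powr (- 1 / M)"
  have "M > 0" using M_gt_2 by simp
  have "0 \<le> c * 2 powr (1 / M)" using assms(1) by simp
  then have t: "0 < t" "t < 1" using assms(2-4) by linarith+
  have "2 powr (- 1 / M) < 2 powr 0" by (rule powr_less_mono) (use \<open>M > 0\<close> in auto)
  then have "s < t" using t by (simp add: s_def)
  have "c = c * 2 powr (1 / M) * 2 powr (- 1 / M)" by (simp add: powr_add[symmetric])
  also have "\<dots> < s" unfolding s_def using assms(2) by (intro mult_strict_right_mono) auto
  finally have "c < s" .
  have "s powr M = t powr M * (2 powr (- 1 / M)) powr M" by (simp add: s_def powr_mult)
  also have "(2 powr (- 1 / M)) powr M = 2 powr (- 1)" using \<open>M > 0\<close> by (simp add: powr_powr)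
  also have "(2::real) powr (- 1) = 1 / 2" by (simp add: powr_minus_divide)
  finally have s_M: "s powr M = t powr M / 2" by simp
  have "u t \<le> u x" if "s \<le> x" "x \<le> t" for x
    using u_antimono[of x t] flux_nonpos that \<open>c < s\<close> assms(1,3,4) by auto
  then have "flux t \<le> flux s - u t powr p * (t powr M - s powr M) / M"
    using \<open>c < s\<close> \<open>s < t\<close> assms(1) t pos[of t] \<open>t < b\<close>
    by (intro flux_drop_on_descent) auto
  moreover have "flux s \<le> 0" using flux_nonpos \<open>c < s\<close> \<open>s < t\<close> \<open>t < b\<close> by auto
  ultimately have "flux t \<le> - (u t powr p * t / (2 * M)) * t powr (M - 1)"
    using s_M t by (simp add: field_simps powr_diff)
  then show ?thesis using deriv_eq_flux[of t] t by (simp add: divide_le_eq)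
qed

lemma inverse_power_growth:
  assumes "0 < s" "s \<le> r" "r < 1"
    and pos: "\<And>x. s \<le> x \<Longrightarrow> x \<le> r \<Longrightarrow> u x > 0"
    and slope: "\<And>x. s \<le> x \<Longrightarrow> x \<le> r \<Longrightarrow> u' x \<le> - (u x powr p) * x / (2 * M)"
  shows "u s powr (1 - p) + (p - 1) * (r\<^sup>2 - s\<^sup>2) / (4 * M) \<le> u r powr (1 - p)"
proof -
  define g where "g \<tau> = u \<tau> powr (1 - p) - (p - 1) * \<tau>\<^sup>2 / (4 * M)" for \<tau>
  have "g s \<le> g r"
  proof (rule DERIV_nonneg_imp_nondecreasing[OF \<open>s \<le> r\<close>])
    fix x assume x: "s \<le> x" "x \<le> r"
    then have x01: "0 < x" "x < 1" and ux: "u x > 0" using assms by auto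
    have "(g has_real_derivative
        (1 - p) * u x powr (1 - p - of_nat 1) * u' x - (p - 1) * (2 * x) / (4 * M)) (at x)"
      unfolding g_def[abs_def] using M_gt_2
      by (intro derivative_intros DERIV_fun_powr has_deriv x01 ux) (auto intro!: derivative_eq_intros)
    moreover have "(p - 1) * (2 * x) / (4 * M) \<le> (1 - p) * u x powr (1 - p - of_nat 1) * u' x"
    proof -
      have "(p - 1) * (2 * x) / (4 * M) = (p - 1) * u x powr (- p) * (u x powr p * x / (2 * M))"
        using ux by (simp add: powr_add[symmetric])
      also have "\<dots> \<le> (p - 1) * u x powr (- p) * (- u' x)"
        using slope[OF x] p_gt_1 ux by (intro mult_left_mono) auto
      also have "\<dots> = (1 - p) * u x powr (1 - p - of_nat 1) * u' x" by (simp add: algebra_simps)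
      finally show ?thesis .
    qed
    ultimately show "\<exists>y. (g has_real_derivative y) (at x) \<and> y \<ge> 0"
      by (intro exI conjI) auto
  qed
  moreover have "(p - 1) * (r\<^sup>2 - s\<^sup>2) / (4 * M) = (p - 1) * r\<^sup>2 / (4 * M) - (p - 1) * s\<^sup>2 / (4 * M)"
    by (simp add: right_diff_distrib diff_divide_distrib)
  ultimately show ?thesis unfolding g_def by linarith
qed

lemma descent_far_bound:
  assumes "0 \<le> c" "c < r" "r < b" "b \<le> 1"
    and pos: "\<And>x. c \<le> x \<Longrightarrow> x < b \<Longrightarrow> u x > 0"
    and flux_nonpos: "\<And>x. c < x \<Longrightarrow> x < b \<Longrightarrow> flux x \<le> 0"
    and far: "2 * 2 powr (2 / M) * c\<^sup>2 < r\<^sup>2"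
  shows "r\<^sup>2 * u r powr (p - 1) \<le> 8 * M / (p - 1)"
proof -
  define s where "s = r / sqrt 2"
  have s: "0 < s" "s < r" "s\<^sup>2 = r\<^sup>2 / 2"
    using assms(1,2) by (auto simp: s_def power_divide divide_less_eq)
  have "(c * 2 powr (1 / M))\<^sup>2 = c\<^sup>2 * 2 powr (2 / M)"
    by (simp add: power_mult_distrib power2_eq_square powr_add[symmetric])
  also have "\<dots> = 2 * 2 powr (2 / M) * c\<^sup>2 / 2" by simp
  also have "\<dots> < s\<^sup>2" using far s(3) by simp
  finally have "(c * 2 powr (1 / M))\<^sup>2 < s\<^sup>2" .
  then have far_s: "c * 2 powr (1 / M) < s"
    by (rule power_less_imp_less_base) (use s(1) in linarith)
  have "(1::real) \<le> 2 powr (1 / M)" using M_gt_2 by (intro ge_one_powr_ge_zero) auto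
  then have "c < s" using far_s assms(1) by (smt (verit) mult_le_cancel_left1)
  have "u' t \<le> - (u t powr p) * t / (2 * M)" if t: "s \<le> t" "t \<le> r" for t
    using deriv_bound_on_descent[OF assms(1) _ _ assms(4) pos flux_nonpos] far_s t assms(3) by simp
  then have "u s powr (1 - p) + (p - 1) * (r\<^sup>2 - s\<^sup>2) / (4 * M) \<le> u r powr (1 - p)"
    using s \<open>c < s\<close> assms(3,4) pos by (intro inverse_power_growth) auto
  moreover have "u s powr (1 - p) > 0" using pos[of s] \<open>c < s\<close> s(2) assms(3) by simp
  moreover have "r\<^sup>2 - s\<^sup>2 = r\<^sup>2 / 2" using s(3) by simp
  then have "(p - 1) * (r\<^sup>2 - s\<^sup>2) / (4 * M) = (p - 1) * r\<^sup>2 / (8 * M)" by simp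
  ultimately have "(p - 1) * r\<^sup>2 / (8 * M) < u r powr (1 - p)" by linarith
  moreover have "u r > 0" using pos assms(2,3) by simp
  then have "u r powr (1 - p) = 1 / u r powr (p - 1)" by (simp add: powr_minus_divide[symmetric])
  ultimately show ?thesis
    using \<open>u r > 0\<close> M_gt_2 p_gt_1 by (simp add: field_simps)
qed

lemma descent_bound:
  assumes "0 \<le> c" "c \<le> r" "r \<le> b" "b \<le> 1"
    and pos: "\<And>x. c \<le> x \<Longrightarrow> x < b \<Longrightarrow> u x > 0" and "u b = 0"
    and flux_nonpos: "\<And>x. c < x \<Longrightarrow> x < b \<Longrightarrow> flux x \<le> 0"
    and B: "8 * M / (p - 1) \<le> B" "2 * 2 powr (2 / M) * (c\<^sup>2 * u c powr (p - 1)) \<le> B"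
  shows "scaled_size p u r \<le> B"
proof (cases "r = b")
  case True
  have "0 < 8 * M / (p - 1)" using M_gt_2 p_gt_1 by simp
  then show ?thesis using True \<open>u b = 0\<close> B(1) by (simp add: scaled_size_def)
next
  case False
  then have "r < b" "u r > 0" using assms(3) pos[of r] assms(2) by auto
  show ?thesis
  proof (cases "c < r \<and> 2 * 2 powr (2 / M) * c\<^sup>2 < r\<^sup>2")
    case True
    then have "r\<^sup>2 * u r powr (p - 1) \<le> 8 * M / (p - 1)"
      using descent_far_bound[of c r b] assms \<open>r < b\<close> by auto
    then show ?thesis using B(1) \<open>u r > 0\<close> by (simp add: scaled_size_def)
  next
    case False
    have "(1::real) \<le> 2 powr (2 / M)" using M_gt_2 by (intro ge_one_powr_ge_zero) auto
    then have "r\<^sup>2 \<le> 2 * 2 powr (2 / M) * c\<^sup>2"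
      using False assms(2) by (cases "c < r") (auto simp: mult_le_cancel_right1)
    moreover have "u r \<le> u c" using u_antimono[of c r] assms flux_nonpos \<open>r < b\<close> by auto
    then have "u r powr (p - 1) \<le> u c powr (p - 1)"
      using \<open>u r > 0\<close> p_gt_1 by (intro powr_mono2) auto
    ultimately have "r\<^sup>2 * u r powr (p - 1) \<le> 2 * 2 powr (2 / M) * c\<^sup>2 * u c powr (p - 1)"
      by (intro mult_mono) auto
    then show ?thesis using B(2) \<open>u r > 0\<close> by (simp add: scaled_size_def mult.assoc)
  qed
qed

lemma flux_drop_bound:
  assumes "0 < s" "s \<le> b" "b < 1"
    and nonneg: "\<And>x. s \<le> x \<Longrightarrow> x \<le> b \<Longrightarrow> 0 \<le> u x"
    and bound: "\<And>x. s \<le> x \<Longrightarrow> x \<le> b \<Longrightarrow> x\<^sup>2 * u x powr (p - 1) \<le> B"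
    and "2 * p / (p - 1) < M"
  shows "- flux b \<le> - flux s + B powr (p / (p - 1)) / (M - 2 * p / (p - 1)) * b powr (M - 2 * p / (p - 1))"
proof -
  define e where "e = M - 2 * p / (p - 1)"
  define A where "A = B powr (p / (p - 1)) / e"
  define h where "h \<tau> = - flux \<tau> - A * \<tau> powr e" for \<tau>
  have "e > 0" using assms(6) by (simp add: e_def)
  have "h b \<le> h s"
  proof (rule DERIV_nonpos_imp_nonincreasing[OF \<open>s \<le> b\<close>])
    fix x assume x: "s \<le> x" "x \<le> b"
    then have x01: "0 < x" "x < 1" using assms by auto
    have "((\<lambda>\<tau>. \<tau> powr e) has_real_derivative e * x powr (e - 1)) (at x)"
      by (rule has_real_derivative_powr) (use x01 in auto)
    from DERIV_diff[OF DERIV_minus[OF has_deriv_flux[OF x01]] DERIV_cmult[OF this, of A]]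
    have "(h has_real_derivative
        x powr (M - 1) * \<bar>u x\<bar> powr (p - 1) * u x - A * (e * x powr (e - 1))) (at x)"
      unfolding h_def[abs_def] by simp
    moreover have "\<bar>u x\<bar> powr (p - 1) * u x = u x powr p"
      using nonneg[OF x] by (simp add: powr_mult_base mult.commute)
    moreover have "x powr (M - 1) * u x powr p \<le> A * (e * x powr (e - 1))"
      using powr_weight_bound[OF x01(1) nonneg[OF x] p_gt_1 bound[OF x], of M] \<open>e > 0\<close>
      by (simp add: A_def e_def)
    ultimately show "\<exists>y. (h has_real_derivative y) (at x) \<and> y \<le> 0"
      by (intro exI[of _ "x powr (M - 1) * \<bar>u x\<bar> powr (p - 1) * u x - A * (e * x powr (e - 1))"])
        (simp add: mult.assoc)
  qed
  moreover have "0 \<le> A * s powr e"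
    using \<open>e > 0\<close> by (simp add: A_def)
  ultimately show ?thesis by (simp add: h_def A_def e_def)
qed

(* The hypothesis flux_small stands in for flux c = 0, which is not available for the first
   zone: there c = 0 and only u'(0) = 0 is known. *)
lemma flux_at_zero_bound:
  assumes "0 \<le> c" "c < b" "b < 1"
    and pos: "\<And>x. c \<le> x \<Longrightarrow> x < b \<Longrightarrow> u x > 0" and "u b = 0"
    and flux_small: "\<And>\<eta>. \<eta> > 0 \<Longrightarrow> \<exists>s. c \<le> s \<and> s < b \<and> 0 < s \<and> - flux s < \<eta>"
    and bound: "\<And>x. c \<le> x \<Longrightarrow> x \<le> b \<Longrightarrow> scaled_size p u x \<le> B"
    and "2 * p / (p - 1) < M"
  shows "- flux b \<le> B powr (p / (p - 1)) / (M - 2 * p / (p - 1)) * b powr (M - 2 * p / (p - 1))"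
    (is "_ \<le> ?A * _")
proof (rule ccontr)
  assume "\<not> ?thesis"
  then obtain s where s: "c \<le> s" "s < b" "0 < s"
    "- flux s < - flux b - ?A * b powr (M - 2 * p / (p - 1))"
    using flux_small[of "- flux b - ?A * b powr (M - 2 * p / (p - 1))"] by auto
  have "u x \<ge> 0" if "s \<le> x" "x \<le> b" for x
    using pos[of x] that s(1) \<open>u b = 0\<close> by (cases "x = b") auto
  moreover have "x\<^sup>2 * u x powr (p - 1) \<le> B" if "s \<le> x" "x \<le> b" for x
    using bound[of x] that s(1) calculation[OF that] by (simp add: scaled_size_def)
  ultimately have "- flux b \<le> - flux s + ?A * b powr (M - 2 * p / (p - 1))"
    using flux_drop_bound[of s b B] s(2,3) assms(3,8) by simp
  then show False using s(4) by simp
qed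

lemma zero_slope_bound:
  assumes "0 \<le> c" "c < b" "b < 1"
    and pos: "\<And>x. c \<le> x \<Longrightarrow> x < b \<Longrightarrow> u x > 0" and "u b = 0"
    and flux_nonpos: "\<And>x. c < x \<Longrightarrow> x < b \<Longrightarrow> flux x \<le> 0"
    and flux_small: "\<And>\<eta>. \<eta> > 0 \<Longrightarrow> \<exists>s. c \<le> s \<and> s < b \<and> 0 < s \<and> - flux s < \<eta>"
    and bound: "\<And>x. c \<le> x \<Longrightarrow> x \<le> b \<Longrightarrow> scaled_size p u x \<le> B"
    and "2 * p / (p - 1) < M"
  shows "u' b < 0" and "scaled_slope p u' b \<le> B powr (p / (p - 1)) / (M - 2 * p / (p - 1))"
proof -
  define e where "e = M - 2 * p / (p - 1)"
  define A where "A = B powr (p / (p - 1)) / e"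
  have "b > 0" using assms(1,2) by simp
  have "flux b < flux ((c + b) / 2)"
    using flux_strict_antimono[of "(c + b) / 2" b] assms(1-3) pos by auto
  also have "\<dots> \<le> 0" using flux_nonpos assms(1,2) by simp
  finally have "flux b < 0" .
  then show "u' b < 0" using deriv_eq_flux[OF \<open>b > 0\<close>] \<open>b > 0\<close> by (simp add: divide_neg_pos)
  have "scaled_slope p u' b = (- flux b) * (b powr (2 / (p - 1) + 1) / b powr (M - 1))"
    using deriv_eq_flux[OF \<open>b > 0\<close>] \<open>flux b < 0\<close> \<open>b > 0\<close>
    by (simp add: scaled_slope_def abs_of_neg divide_neg_pos)
  also have "\<dots> \<le> (A * b powr e) * (b powr (2 / (p - 1) + 1) / b powr (M - 1))"
    using flux_at_zero_bound[OF assms(1-5) flux_small bound assms(9)]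
    by (intro mult_right_mono) (auto simp: A_def e_def)
  also have "\<dots> = A * b powr (e + (2 / (p - 1) + 1) - (M - 1))"
    using \<open>b > 0\<close> by (simp add: powr_add powr_diff power2_eq_square)
  also have "e + (2 / (p - 1) + 1) - (M - 1) = 0"
  proof -
    have "2 / (p - 1) - 2 * p / (p - 1) = -2" using p_gt_1 by (simp add: diff_divide_distrib[symmetric] field_simps)
    then show ?thesis by (simp add: e_def)
  qed
  finally show "scaled_slope p u' b \<le> B powr (p / (p - 1)) / (M - 2 * p / (p - 1))"
    using \<open>b > 0\<close> by (simp add: A_def e_def)
qed

context
  fixes a c :: real
  assumes ascent: "0 < a" "a < c" "c < 1" "u a = 0" "\<And>x. a < x \<Longrightarrow> x \<le> c \<Longrightarrow> u x > 0"
    "flux c = 0"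
begin

lemma ascent_nonneg: "a \<le> x \<Longrightarrow> x \<le> c \<Longrightarrow> 0 \<le> u x"
  using ascent(4) ascent(5)[of x] by (cases "x = a") auto

lemma ascent_flux_nonneg: "a \<le> x \<Longrightarrow> x \<le> c \<Longrightarrow> 0 \<le> flux x"
  using flux_antimono[of x c] ascent ascent_nonneg by auto

lemma ascent_mono: "a \<le> s \<Longrightarrow> s \<le> t \<Longrightarrow> t \<le> c \<Longrightarrow> u s \<le> u t"
  using u_mono[of s t] ascent(1,3) ascent_flux_nonneg by auto

lemma ascent_deriv_antimono:
  assumes "a \<le> s" "s \<le> t" "t \<le> c"
  shows "u' t \<le> u' s"
proof -
  have "0 < s" "0 < t" using assms ascent(1) by auto
  have "t powr (M - 1) \<ge> s powr (M - 1)" using assms \<open>0 < s\<close> M_gt_2 by (intro powr_mono2) auto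
  have "u' t = flux t / t powr (M - 1)" using deriv_eq_flux \<open>0 < t\<close> by simp
  also have "\<dots> \<le> flux t / s powr (M - 1)"
    using \<open>t powr (M - 1) \<ge> s powr (M - 1)\<close> ascent_flux_nonneg[of t] assms \<open>0 < s\<close>
    by (intro divide_left_mono) auto
  also have "\<dots> \<le> flux s / s powr (M - 1)"
    using flux_antimono[of s t] assms ascent ascent_nonneg \<open>0 < s\<close> by (intro divide_right_mono) auto
  also have "\<dots> = u' s" using deriv_eq_flux \<open>0 < s\<close> by simp
  finally show ?thesis .
qed

lemma ascent_mvt:
  assumes "a \<le> s" "s < t" "t \<le> c"
  obtains \<xi> where "s < \<xi>" "\<xi> < t" "u t - u s = (t - s) * u' \<xi>"
  using MVT2[of s t u u'] has_deriv assms ascent(1,3) that by force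

lemma ascent_half_height: "u c / 2 \<le> u ((a + c) / 2)"
proof -
  define mid where "mid = (a + c) / 2"
  have mid: "a < mid" "mid < c" "mid - a = c - mid" using ascent(2) by (auto simp: mid_def field_simps)
  obtain x1 where x1: "a < x1" "x1 < mid" "u mid - u a = (mid - a) * u' x1"
    using ascent_mvt[of a mid] mid by auto
  obtain x2 where x2: "mid < x2" "x2 < c" "u c - u mid = (c - mid) * u' x2"
    using ascent_mvt[of mid c] mid by auto
  have "(mid - a) * u' x2 \<le> (mid - a) * u' x1"
    using ascent_deriv_antimono[of x1 x2] x1 x2 mid by (intro mult_left_mono) auto
  moreover have "u c - u mid = (mid - a) * u' x2" using x2(3) mid(3) by simp
  ultimately show ?thesis using x1(3) ascent(4) unfolding mid_def[symmetric] by linarith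
qed

lemma ascent_mid_slope: "(c - a) / 2 * (u c / 2) powr p \<le> u' ((a + c) / 2)"
proof -
  define mid where "mid = (a + c) / 2"
  have mid: "a < mid" "mid < c" "0 < mid" "c - mid = (c - a) / 2"
    using ascent(1,2) by (auto simp: mid_def field_simps)
  obtain x where x: "mid < x" "x < c"
    and mvt: "flux c - flux mid = (c - mid) * - (x powr (M - 1) * \<bar>u x\<bar> powr (p - 1) * u x)"
    using MVT2[of mid c flux "\<lambda>r. - (r powr (M - 1) * \<bar>u r\<bar> powr (p - 1) * u r)"]
      has_deriv_flux mid ascent(3) by force
  have "u c / 2 \<le> u x"
    using ascent_half_height ascent_mono[of mid x] x mid by (simp add: mid_def)
  then have "(u c / 2) powr p \<le> u x powr p" using ascent(5)[of c] ascent(2) p_gt_1 by (intro powr_mono2) auto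
  moreover have "mid powr (M - 1) \<le> x powr (M - 1)" using x mid M_gt_2 by (intro powr_mono2) auto
  ultimately have "mid powr (M - 1) * (u c / 2) powr p \<le> x powr (M - 1) * u x powr p"
    by (intro mult_mono) auto
  moreover have "\<bar>u x\<bar> powr (p - 1) * u x = u x powr p"
    using ascent_nonneg[of x] x mid by (simp add: powr_mult_base mult.commute)
  then have "flux mid = (c - a) / 2 * (x powr (M - 1) * u x powr p)"
    using mvt ascent(6) mid by simp
  ultimately have "(c - a) / 2 * (mid powr (M - 1) * (u c / 2) powr p) \<le> flux mid"
    using ascent(2) by (simp add: mult_left_mono)
  then show ?thesis
    using deriv_eq_flux[of mid] mid by (simp add: le_divide_eq mult.commute mult.left_commute mid_def)
qed

lemma ascent_estimates:
  shows "(c - a)\<^sup>2 * u c powr (p - 1) \<le> 4 * 2 powr p"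
    and "u c \<le> (c - a) * u' a"
    and "(c - a) / 2 * (u c / 2) powr p \<le> u' a"
proof -
  define mid where "mid = (a + c) / 2"
  have mid: "a < mid" "mid < c" "mid - a = (c - a) / 2" using ascent(2) by (auto simp: mid_def field_simps)
  have slope_mid: "(c - a) / 2 * (u c / 2) powr p \<le> u' mid"
    using ascent_mid_slope by (simp add: mid_def)
  show "(c - a) / 2 * (u c / 2) powr p \<le> u' a"
    using slope_mid ascent_deriv_antimono[of a mid] mid by simp
  obtain x where x: "a < x" "x < c" "u c - u a = (c - a) * u' x"
    using ascent_mvt[of a c] ascent(2) by auto
  show "u c \<le> (c - a) * u' a"
    using x ascent(2,4) ascent_deriv_antimono[of a x] by (simp add: mult_left_mono)
  obtain y where y: "a < y" "y < mid" "u mid - u a = (mid - a) * u' y"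
    using ascent_mvt[of a mid] mid by auto
  have "u c > 0" using ascent(2,5) by simp
  have "u c powr (p - 1) * u c = u c powr p" using \<open>u c > 0\<close> by (simp add: powr_mult_base mult.commute)
  then have "(c - a)\<^sup>2 * u c powr (p - 1) * u c / (4 * 2 powr p) = (c - a) / 2 * ((c - a) / 2 * (u c / 2) powr p)"
    using \<open>u c > 0\<close> by (simp add: powr_divide power2_eq_square field_simps)
  also have "\<dots> \<le> (c - a) / 2 * u' y"
    using slope_mid ascent_deriv_antimono[of y mid] y mid ascent(2) by (intro mult_left_mono) auto
  also have "\<dots> = u mid" using y(3) mid(3) ascent(4) by simp
  also have "\<dots> \<le> u c" using ascent_mono[of mid c] mid by simp
  finally show "(c - a)\<^sup>2 * u c powr (p - 1) \<le> 4 * 2 powr p"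
    using \<open>u c > 0\<close> by (simp add: field_simps)
qed

lemma peak_scaled_size_bound:
  assumes "scaled_slope p u' a \<le> D"
  shows "c\<^sup>2 * u c powr (p - 1) \<le> peak_bound p D"
  using peak_bound_of_estimates[OF ascent(1,2) _ p_gt_1 ascent_estimates] ascent(2) ascent(5)[of c] assms
  by (simp add: scaled_slope_def)

end

lemma descent_zone:
  assumes "0 \<le> c" "c < b" "b \<le> 1"
    and pos: "\<And>x. c \<le> x \<Longrightarrow> x < b \<Longrightarrow> u x > 0" and "u b = 0"
    and flux_nonpos: "\<And>x. c < x \<Longrightarrow> x < b \<Longrightarrow> flux x \<le> 0"
    and flux_small: "\<And>\<eta>. \<eta> > 0 \<Longrightarrow> \<exists>s. c \<le> s \<and> s < b \<and> 0 < s \<and> - flux s < \<eta>"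
    and peak: "c\<^sup>2 * u c powr (p - 1) \<le> peak_bound p D"
    and "2 * p / (p - 1) < M"
  shows "\<And>r. c \<le> r \<Longrightarrow> r \<le> b \<Longrightarrow> scaled_size p u r \<le> zone_bound M p D"
    and "b < 1 \<Longrightarrow> u' b < 0 \<and> scaled_slope p u' b \<le> next_slope_bound M p D"
proof -
  have "2 * 2 powr (2 / M) * (c\<^sup>2 * u c powr (p - 1)) \<le> 2 * 2 powr (2 / M) * peak_bound p D"
    using peak by (intro mult_left_mono) auto
  also have "\<dots> \<le> zone_bound M p D" by (simp add: zone_bound_def)
  finally have B: "8 * M / (p - 1) \<le> zone_bound M p D"
    "2 * 2 powr (2 / M) * (c\<^sup>2 * u c powr (p - 1)) \<le> zone_bound M p D"
    by (simp_all add: zone_bound_def)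
  show bound: "scaled_size p u r \<le> zone_bound M p D" if "c \<le> r" "r \<le> b" for r
    using descent_bound[OF assms(1) that assms(3) pos \<open>u b = 0\<close> flux_nonpos B] .
  assume "b < 1"
  from zero_slope_bound[OF assms(1,2) this pos \<open>u b = 0\<close> flux_nonpos flux_small bound assms(9)]
  show "u' b < 0 \<and> scaled_slope p u' b \<le> next_slope_bound M p D"
    by (simp add: next_slope_bound_def)
qed

lemma first_zone:
  assumes deriv_0: "(u has_real_derivative 0) (at 0 within {0..1})"
    and "u 0 > 0" "u 1 = 0" "2 * p / (p - 1) < M"
  obtains b where "0 < b" "b \<le> 1" "u b = 0" "\<And>r. 0 \<le> r \<Longrightarrow> r < b \<Longrightarrow> u r > 0"
    "\<And>r. 0 \<le> r \<Longrightarrow> r \<le> b \<Longrightarrow> scaled_size p u r \<le> zone_bound M p D"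
    "b < 1 \<Longrightarrow> u' b < 0 \<and> scaled_slope p u' b \<le> next_slope_bound M p D"
proof -
  obtain b where b: "0 < b" "b \<le> 1" "u b = 0" and pos: "\<And>r. 0 \<le> r \<Longrightarrow> r < b \<Longrightarrow> u r > 0"
    using first_zero_after[OF continuous \<open>u 0 > 0\<close> \<open>u 1 = 0\<close>] by auto
  have flux_nonpos: "flux x \<le> 0" if x: "0 < x" "x < b" for x
  proof (rule ccontr)
    assume "\<not> flux x \<le> 0"
    have "flux x \<le> flux s" if s: "0 < s" "s < x" for s
    proof (rule flux_antimono)
      show "0 < s" "s \<le> x" "x < 1" using s x b(2) by auto
      show "0 \<le> u r" if "s < r" "r < x" for r using pos[of r] that s x by auto
    qed
    then show False
      using flux_small_near_0[OF deriv_0, of x "flux x" 1] x b(2) \<open>\<not> flux x \<le> 0\<close> by force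
  qed
  have flux_small: "\<exists>s. 0 \<le> s \<and> s < b \<and> 0 < s \<and> - flux s < \<eta>" if "\<eta> > 0" for \<eta>
  proof -
    have "\<exists>s. 0 < s \<and> s < b \<and> - 1 * flux s < \<eta>"
      using flux_small_near_0[OF deriv_0 b(1) b(2) that, of "-1"] by simp
    then obtain s where "0 < s" "s < b" "- flux s < \<eta>" by auto
    then show ?thesis by (intro exI[of _ s]) auto
  qed
  have "0\<^sup>2 * u 0 powr (p - 1) \<le> peak_bound p D" by (simp add: peak_bound_nonneg)
  from descent_zone[OF _ b(1,2) pos b(3) flux_nonpos flux_small this assms(4)]
  show ?thesis using that b pos by auto
qed

lemma hump_after_zero:
  assumes "0 < a" "a < 1" "u a = 0" "u' a > 0" "u 1 = 0"
  obtains c b where "a < c" "c < b" "b \<le> 1" "u b = 0" "\<And>r. a < r \<Longrightarrow> r < b \<Longrightarrow> u r > 0"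
    "flux c = 0" "\<And>r. a \<le> r \<Longrightarrow> r \<le> b \<Longrightarrow> u r \<le> u c"
proof -
  obtain d where "d > 0" and d: "\<And>h. 0 < h \<Longrightarrow> h < d \<Longrightarrow> u a < u (a + h)"
    using DERIV_pos_inc_right[OF has_deriv[OF assms(1,2)] assms(4)] by blast
  define step where "step = min d (1 - a)"
  define x0 where "x0 = a + step / 2"
  have "0 < step" "step \<le> d" "step \<le> 1 - a" using \<open>d > 0\<close> assms(2) by (auto simp: step_def)
  then have x0: "a < x0" "x0 < 1" "x0 - a < d" by (simp_all add: x0_def)
  have "u x0 > 0" using d[of "x0 - a"] x0 assms(3) by auto
  then obtain b where b: "x0 < b" "b \<le> 1" "u b = 0" and pos_x0: "\<And>r. x0 \<le> r \<Longrightarrow> r < b \<Longrightarrow> u r > 0"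
    using first_zero_after[of x0 1 u] continuous_on_u[of x0 1] \<open>u 1 = 0\<close> x0 assms(1) by auto
  have pos: "u r > 0" if "a < r" "r < b" for r
    using d[of "r - a"] pos_x0[of r] that x0 assms(3) by (cases "r < x0") auto
  obtain c where c: "c \<in> {a..b}" and max: "\<And>y. y \<in> {a..b} \<Longrightarrow> u y \<le> u c"
    using continuous_attains_sup[of "{a..b}" u] continuous_on_u[of a b] assms(1) b x0 by auto
  have "u c > 0" using max[of x0] \<open>u x0 > 0\<close> x0 b by auto
  then have "a < c" "c < b" using c assms(3) b(3) by (auto simp: order.order_iff_strict)
  have "u' c = 0"
  proof (rule DERIV_local_max[OF has_deriv])
    show "0 < c" "c < 1" using \<open>a < c\<close> \<open>c < b\<close> assms(1) b(2) by auto
    show "0 < min (c - a) (b - c)" using \<open>a < c\<close> \<open>c < b\<close> by simp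
    show "\<forall>y. \<bar>c - y\<bar> < min (c - a) (b - c) \<longrightarrow> u y \<le> u c"
    proof (intro allI impI)
      fix y assume "\<bar>c - y\<bar> < min (c - a) (b - c)"
      then have "y \<in> {a..b}" by (auto simp: abs_if split: if_splits)
      then show "u y \<le> u c" by (rule max)
    qed
  qed
  then have "flux c = 0" by (simp add: flux_def)
  have max': "u r \<le> u c" if "a \<le> r" "r \<le> b" for r using max that by simp
  show ?thesis by (rule that[OF \<open>a < c\<close> \<open>c < b\<close> b(2,3) pos \<open>flux c = 0\<close> max'])
qed

lemma next_zone:
  assumes "0 < a" "a < 1" "u a = 0" "u' a > 0" "u 1 = 0" "scaled_slope p u' a \<le> D"
    and "2 * p / (p - 1) < M"
  obtains b where "a < b" "b \<le> 1" "u b = 0" "\<And>r. a < r \<Longrightarrow> r < b \<Longrightarrow> u r > 0"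
    "\<And>r. a \<le> r \<Longrightarrow> r \<le> b \<Longrightarrow> scaled_size p u r \<le> zone_bound M p D"
    "b < 1 \<Longrightarrow> u' b < 0 \<and> scaled_slope p u' b \<le> next_slope_bound M p D"
proof -
  obtain c b where "a < c" "c < b" "b \<le> 1" "u b = 0" and pos: "\<And>r. a < r \<Longrightarrow> r < b \<Longrightarrow> u r > 0"
    and "flux c = 0" and max: "\<And>r. a \<le> r \<Longrightarrow> r \<le> b \<Longrightarrow> u r \<le> u c"
    by (elim hump_after_zero[OF assms(1-5)])
  have flux_nonpos: "flux x \<le> 0" if x: "c < x" "x < b" for x
  proof -
    have "flux x < flux c"
    proof (rule flux_strict_antimono)
      show "0 < c" "c < x" "x < 1" using x \<open>a < c\<close> \<open>b \<le> 1\<close> assms(1) by auto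
      show "u r > 0" if "c < r" "r < x" for r using pos that x \<open>a < c\<close> by auto
    qed
    then show ?thesis using \<open>flux c = 0\<close> by simp
  qed
  have flux_small: "\<exists>s. c \<le> s \<and> s < b \<and> 0 < s \<and> - flux s < \<eta>" if "\<eta> > 0" for \<eta>
    using that \<open>flux c = 0\<close> \<open>a < c\<close> \<open>c < b\<close> assms(1) by (intro exI[of _ c]) auto
  have peak: "c\<^sup>2 * u c powr (p - 1) \<le> peak_bound p D"
    using assms(6) \<open>a < c\<close> \<open>c < b\<close> \<open>b \<le> 1\<close> pos
    by (intro peak_scaled_size_bound[OF assms(1) \<open>a < c\<close> _ assms(3) _ \<open>flux c = 0\<close>]) auto
  note zone = descent_zone[of c b, OF _ \<open>c < b\<close> \<open>b \<le> 1\<close> _ \<open>u b = 0\<close> flux_nonpos flux_small peak assms(7)]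
  have "scaled_size p u r \<le> zone_bound M p D" if r: "a \<le> r" "r \<le> b" for r
  proof (cases "r \<le> c")
    case True
    have "0 \<le> u r" using pos[of r] r True \<open>c < b\<close> assms(3) by (cases "r = a") auto
    then have "scaled_size p u r \<le> c\<^sup>2 * u c powr (p - 1)"
      using max[of r] r True assms(1) p_gt_1 by (intro scaled_size_le_of_le) auto
    then show ?thesis using peak peak_bound_le_zone_bound[of M p D] M_gt_2 by simp
  next
    case False
    then show ?thesis using zone(1)[of r] pos \<open>a < c\<close> assms(1) r by auto
  qed
  moreover have "b < 1 \<Longrightarrow> u' b < 0 \<and> scaled_slope p u' b \<le> next_slope_bound M p D"
    using zone(2) pos \<open>a < c\<close> assms(1) by auto
  ultimately show ?thesis
    using that[OF _ \<open>b \<le> 1\<close> \<open>u b = 0\<close> pos] \<open>a < c\<close> \<open>c < b\<close> by auto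
qed

lemma next_zone_any_sign:
  assumes "0 < a" "a < 1" "u a = 0" "u' a \<noteq> 0" "u 1 = 0" "scaled_slope p u' a \<le> D"
    and "2 * p / (p - 1) < M"
  obtains b where "a < b" "b \<le> 1" "u b = 0" "\<And>r. a < r \<Longrightarrow> r < b \<Longrightarrow> u r \<noteq> 0"
    "\<And>r. a \<le> r \<Longrightarrow> r \<le> b \<Longrightarrow> scaled_size p u r \<le> zone_bound M p D"
    "b < 1 \<Longrightarrow> u' b \<noteq> 0 \<and> scaled_slope p u' b \<le> next_slope_bound M p D"
proof (cases "u' a > 0")
  case True
  show ?thesis
  proof (rule next_zone[OF assms(1-3) True assms(5-7)])
    fix b assume b: "a < b" "b \<le> 1" "u b = 0" and pos: "\<And>r. a < r \<Longrightarrow> r < b \<Longrightarrow> u r > 0"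
      and size: "\<And>r. a \<le> r \<Longrightarrow> r \<le> b \<Longrightarrow> scaled_size p u r \<le> zone_bound M p D"
      and slope: "b < 1 \<Longrightarrow> u' b < 0 \<and> scaled_slope p u' b \<le> next_slope_bound M p D"
    show thesis
    proof (rule that[OF b])
      show "u r \<noteq> 0" if "a < r" "r < b" for r using pos[OF that] by simp
      show "scaled_size p u r \<le> zone_bound M p D" if "a \<le> r" "r \<le> b" for r using size[OF that] .
      show "u' b \<noteq> 0 \<and> scaled_slope p u' b \<le> next_slope_bound M p D" if "b < 1"
        using slope[OF that] by simp
    qed
  qed
next
  case False
  interpret neg: radial_lane_emden M p "\<lambda>r. - u r" "\<lambda>r. - u' r"
    by (rule radial_lane_emden_uminus)
  have neg_zero: "- u a = 0" "- u' a > 0" "- u 1 = 0" "scaled_slope p (\<lambda>r. - u' r) a \<le> D"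
    using False assms(3-6) by (auto simp: scaled_slope_def)
  show ?thesis
  proof (rule neg.next_zone[OF assms(1,2) neg_zero assms(7)])
    fix b assume b: "a < b" "b \<le> 1" "- u b = 0" and pos: "\<And>r. a < r \<Longrightarrow> r < b \<Longrightarrow> - u r > 0"
      and size: "\<And>r. a \<le> r \<Longrightarrow> r \<le> b \<Longrightarrow> scaled_size p (\<lambda>r. - u r) r \<le> zone_bound M p D"
      and slope: "b < 1 \<Longrightarrow> - u' b < 0 \<and> scaled_slope p (\<lambda>r. - u' r) b \<le> next_slope_bound M p D"
    show thesis
    proof (rule that[OF b(1,2)])
      show "u b = 0" using b(3) by simp
      show "u r \<noteq> 0" if "a < r" "r < b" for r using pos[OF that] by simp
      show "scaled_size p u r \<le> zone_bound M p D" if "a \<le> r" "r \<le> b" for r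
        using size[OF that] by (simp add: scaled_size_def)
      show "u' b \<noteq> 0 \<and> scaled_slope p u' b \<le> next_slope_bound M p D" if "b < 1"
        using slope[OF that] by (auto simp: scaled_slope_def)
    qed
  qed
qed

definition nodal_set :: "real set" where
  "nodal_set = {r \<in> {0..<1}. u r \<noteq> 0}"

definition bounded_through_zones :: "nat \<Rightarrow> bool" where
  "bounded_through_zones k \<longleftrightarrow> (\<forall>r\<in>{0..1}. scaled_size p u r \<le> total_zone_bound M p k) \<or>
    (\<exists>z. 0 < z \<and> z < 1 \<and> u z = 0 \<and> u' z \<noteq> 0 \<and> scaled_slope p u' z \<le> slope_bounds M p k \<and>
      (\<forall>r\<in>{0..z}. scaled_size p u r \<le> total_zone_bound M p k) \<and>
      k \<le> card (components_below nodal_set z))"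

lemma bounded_through_first_zone:
  assumes deriv_0: "(u has_real_derivative 0) (at 0 within {0..1})"
    and "u 0 > 0" "u 1 = 0" "finite (components nodal_set)" "2 * p / (p - 1) < M"
  shows "bounded_through_zones 1"
proof (rule first_zone[OF deriv_0 assms(2,3,5), where D = "slope_bounds M p 0"])
  fix b assume b: "0 < b" "b \<le> 1" "u b = 0" and pos: "\<And>r. 0 \<le> r \<Longrightarrow> r < b \<Longrightarrow> u r > 0"
    and size: "\<And>r. 0 \<le> r \<Longrightarrow> r \<le> b \<Longrightarrow> scaled_size p u r \<le> zone_bound M p (slope_bounds M p 0)"
    and slope: "b < 1 \<Longrightarrow> u' b < 0 \<and> scaled_slope p u' b \<le> next_slope_bound M p (slope_bounds M p 0)"
  have size1: "\<forall>r\<in>{0..b}. scaled_size p u r \<le> total_zone_bound M p 1"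
    using size by (simp add: total_zone_bound_def)
  show ?thesis
  proof (cases "b = 1")
    case True
    then show ?thesis using size1 by (simp add: bounded_through_zones_def)
  next
    case False
    have "card (components_below nodal_set (- 1)) < card (components_below nodal_set b)"
      using b pos[of 0] by (intro card_components_below_less[OF assms(4), of 0]) (auto simp: nodal_set_def)
    then have "1 \<le> card (components_below nodal_set b)" by simp
    then show ?thesis
      using b False slope size1 unfolding bounded_through_zones_def
      by (intro disjI2 exI[of _ b]) auto
  qed
qed

lemma bounded_through_next_zone:
  assumes "u 1 = 0" "finite (components nodal_set)" "2 * p / (p - 1) < M"
    and "bounded_through_zones k"
  shows "bounded_through_zones (Suc k)"
proof -
  let ?Z = "zone_bound M p (slope_bounds M p k)"
  have "0 < ?Z" "0 \<le> total_zone_bound M p k"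
    using zone_bound_pos total_zone_bound_nonneg M_gt_2 p_gt_1 by auto
  consider (everywhere) "\<forall>r\<in>{0..1}. scaled_size p u r \<le> total_zone_bound M p k"
    | (up_to_zero) z where "0 < z" "z < 1" "u z = 0" "u' z \<noteq> 0" "scaled_slope p u' z \<le> slope_bounds M p k"
      "\<forall>r\<in>{0..z}. scaled_size p u r \<le> total_zone_bound M p k"
      "k \<le> card (components_below nodal_set z)"
    using assms(4) unfolding bounded_through_zones_def by metis
  then show ?thesis
  proof cases
    case everywhere
    then show ?thesis using \<open>0 < ?Z\<close> by (force simp: bounded_through_zones_def total_zone_bound_Suc)
  next
    case up_to_zero
    show ?thesis
    proof (rule next_zone_any_sign[OF up_to_zero(1-4) assms(1) up_to_zero(5) assms(3)])
      fix b assume b: "z < b" "b \<le> 1" "u b = 0" and nonzero: "\<And>r. z < r \<Longrightarrow> r < b \<Longrightarrow> u r \<noteq> 0"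
        and size: "\<And>r. z \<le> r \<Longrightarrow> r \<le> b \<Longrightarrow> scaled_size p u r \<le> ?Z"
        and slope: "b < 1 \<Longrightarrow> u' b \<noteq> 0 \<and> scaled_slope p u' b \<le> next_slope_bound M p (slope_bounds M p k)"
      have size_b: "scaled_size p u r \<le> total_zone_bound M p (Suc k)" if r: "0 \<le> r" "r \<le> b" for r
      proof (cases "r \<le> z")
        case True
        then have "scaled_size p u r \<le> total_zone_bound M p k" using up_to_zero(6) r by simp
        then show ?thesis using \<open>0 < ?Z\<close> unfolding total_zone_bound_Suc by linarith
      next
        case False
        then have "scaled_size p u r \<le> ?Z" using size r by simp
        then show ?thesis using \<open>0 \<le> total_zone_bound M p k\<close> unfolding total_zone_bound_Suc by linarith
      qed
      have mid: "(z + b) / 2 \<in> nodal_set"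
        using nonzero[of "(z + b) / 2"] up_to_zero(1) b(1,2) by (auto simp: nodal_set_def)
      have "card (components_below nodal_set z) < card (components_below nodal_set b)"
        by (rule card_components_below_less[OF assms(2) mid]) (use b(1,3) in \<open>auto simp: nodal_set_def\<close>)
      then have "Suc k \<le> card (components_below nodal_set b)" using up_to_zero(7) by simp
      then show ?thesis
        using b size_b slope up_to_zero(1) unfolding bounded_through_zones_def
        by (cases "b = 1") (auto intro!: exI[of _ b])
    qed
  qed
qed

lemma scaled_size_le_total_zone_bound:
  assumes deriv_0: "(u has_real_derivative 0) (at 0 within {0..1})"
    and "u 0 > 0" "u 1 = 0" "finite (components nodal_set)" "2 * p / (p - 1) < M" "r \<in> {0..1}"
  shows "scaled_size p u r \<le> total_zone_bound M p (Suc (card (components nodal_set)))"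
proof -
  let ?m = "card (components nodal_set)"
  have bounded: "bounded_through_zones (Suc j)" for j
  proof (induction j)
    case 0
    show ?case using bounded_through_first_zone[OF assms(1-5)] by simp
  next
    case (Suc j)
    then show ?case using bounded_through_next_zone[OF assms(3-5)] by blast
  qed
  have "card (components_below nodal_set z) \<le> ?m" for z
    using assms(4) by (intro card_mono) (auto simp: components_below_def)
  then show ?thesis
    using bounded[of ?m] assms(6) unfolding bounded_through_zones_def by (meson not_less_eq_eq)
qed

end

section \<open>Uniformity in the exponent\<close>

lemma exponent_window:
  fixes M p :: real
  assumes "2 < M" "(M + 1) / (M - 2) \<le> p"
  shows "1 < p" "2 * p / (p - 1) < M"
proof -
  have "M + 1 \<le> p * (M - 2)" using assms by (simp add: field_simps)
  moreover have "1 < (M + 1) / (M - 2)" using assms(1) by (simp add: field_simps)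
  ultimately show "1 < p" using assms(2) by linarith
  have "2 * p < M * (p - 1)" using \<open>M + 1 \<le> p * (M - 2)\<close> by (simp add: algebra_simps)
  then show "2 * p / (p - 1) < M" using \<open>1 < p\<close> by (simp add: divide_less_eq mult.commute)
qed

lemma total_zone_bound_uniform:
  assumes "2 < M"
  shows "\<exists>C>0. \<forall>p. (M + 1) / (M - 2) \<le> p \<and> p \<le> pM M \<longrightarrow> p * total_zone_bound M p k \<le> C"
proof -
  let ?P = "{(M + 1) / (M - 2) .. pM M}"
  have "continuous_on ?P (\<lambda>p. p * total_zone_bound M p k)"
    using exponent_window[OF assms] assms
    by (intro continuous_intros continuous_on_total_zone_bound) auto
  then have "bounded ((\<lambda>p. p * total_zone_bound M p k) ` ?P)"
    using compact_Icc by (intro compact_imp_bounded compact_continuous_image)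
  then obtain C where "C > 0" and C: "\<And>p. p \<in> ?P \<Longrightarrow> \<bar>p * total_zone_bound M p k\<bar> \<le> C"
    unfolding bounded_pos by auto
  then show ?thesis by (intro exI[of _ C]) (auto dest: abs_le_D1)
qed

lemma radial_sol_scaled_size_bound:
  assumes "2 < M" "1 < p" "2 * p / (p - 1) < M" "radial_sol M p v" "0 < v 0"
    and "finite (components {r \<in> {0..<1}. v r \<noteq> 0})" "r \<in> {0..1}"
  shows "scaled_size p v r \<le> total_zone_bound M p (Suc (nodal_zones v))"
proof -
  obtain v' where deriv: "\<forall>r\<in>{0..1}. (v has_real_derivative v' r) (at r within {0..1})"
    and "v' 0 = 0" "v 1 = 0"
    and weighted: "\<forall>r\<in>{0<..<1}. ((\<lambda>t. t powr (M - 1) * v' t) has_real_derivative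
      - (r powr (M - 1) * \<bar>v r\<bar> powr (p - 1) * v r)) (at r)"
    using assms(4) unfolding radial_sol_def by blast
  interpret radial_lane_emden M p v v'
  proof
    fix r :: real assume r: "0 < r" "r < 1"
    have "(v has_real_derivative v' r) (at r within {0..1})" using deriv r by auto
    then show "(v has_real_derivative v' r) (at r)" using at_within_Icc_at[OF r] by simp
    show "((\<lambda>t. t powr (M - 1) * v' t) has_real_derivative
      - (r powr (M - 1) * \<bar>v r\<bar> powr (p - 1) * v r)) (at r)"
      using weighted r by auto
  next
    show "continuous_on {0..1} v"
      using deriv DERIV_continuous continuous_on_eq_continuous_within by blast
  qed (use assms(1,2) in auto)
  have "(v has_real_derivative 0) (at 0 within {0..1})" using deriv[rule_format, of 0] \<open>v' 0 = 0\<close> by simp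
  from scaled_size_le_total_zone_bound[OF this assms(5) \<open>v 1 = 0\<close> _ assms(3,7)] assms(6)
  show ?thesis by (simp add: nodal_zones_def nodal_set_def)
qed

theorem lemma2p13:
  fixes M :: real and m :: nat and v :: "real \<Rightarrow> real \<Rightarrow> real"
  assumes "M > 2" and "m \<ge> 1"
    and "\<forall>p. 1 < p \<and> p < pM M \<longrightarrow>
           radial_sol M p (v p) \<and> nodal_zones (v p) = m \<and> v p 0 > 0"
  shows "\<exists>C>0. \<exists>\<delta>>0. \<forall>p. pM M - \<delta> < p \<and> p < pM M \<longrightarrow>
           (\<forall>r\<in>{0..1}. 0 \<le> fp p (v p) r \<and> fp p (v p) r \<le> C)"
proof -
  obtain C where "C > 0"
    and C: "\<forall>p. (M + 1) / (M - 2) \<le> p \<and> p \<le> pM M \<longrightarrow> p * total_zone_bound M p (Suc m) \<le> C"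
    using total_zone_bound_uniform[OF assms(1)] by blast
  have window: "pM M - 1 / (M - 2) = (M + 1) / (M - 2)"
    by (simp add: pM_def diff_divide_distrib[symmetric])
  show ?thesis
  proof (intro exI conjI allI impI ballI)
    show "0 < C" "0 < 1 / (M - 2)" using \<open>C > 0\<close> assms(1) by auto
    fix p r :: real assume p: "pM M - 1 / (M - 2) < p \<and> p < pM M" and r: "r \<in> {0..1}"
    then have "(M + 1) / (M - 2) \<le> p" using window by simp
    note exponent = exponent_window[OF assms(1) this]
    then have sol: "radial_sol M p (v p)" "nodal_zones (v p) = m" "v p 0 > 0" using assms(3) p by auto
    then have "finite (components {r \<in> {0..<1}. v p r \<noteq> 0})"
      using assms(2) card.infinite by (fastforce simp: nodal_zones_def)
    from radial_sol_scaled_size_bound[OF assms(1) exponent sol(1,3) this r] sol(2)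
    have "fp p (v p) r \<le> p * total_zone_bound M p (Suc m)"
      using exponent(1) by (simp add: fp_def scaled_size_def mult.assoc)
    also have "\<dots> \<le> C" using C \<open>(M + 1) / (M - 2) \<le> p\<close> p by auto
    finally show "fp p (v p) r \<le> C" .
    show "0 \<le> fp p (v p) r" using exponent(1) by (simp add: fp_def)
  qed
qed

end
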